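(* Let $Y\sim N(\theta,\sigma^2)$ with $\sigma>0$, let $\tau\ge1$, and let $\theta_0=E_0[(Y^2-\sigma^2)\mathbb 1(Y^2\le\sigma^2\tau)]$, where $E_0$ denotes expectation under $\theta=0$. Then $$\big|E[(Y^2-\sigma^2)\mathbb 1(Y^2\le\sigma^2\tau)]-\theta_0\big|\le\min\{\theta^2,3\sigma^2\tau\}.$$ *)

theory Defs
  imports "HOL-Probability.Probability"
begin

text \<open>E_theta[(Y^2 - sigma^2) 1(Y^2 <= sigma^2 tau)] for Y ~ N(theta, sigma^2),
  written as the Lebesgue integral against the normal density
  (normal_density mu sigma takes the standard deviation sigma).\<close>
definition trunc_moment :: "real \<Rightarrow> real \<Rightarrow> real \<Rightarrow> real" where
  "trunc_moment \<theta> \<sigma> \<tau> =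
     (LINT y|lborel. normal_density \<theta> \<sigma> y *
        ((y\<^sup>2 - \<sigma>\<^sup>2) * indicator {y. y\<^sup>2 \<le> \<sigma>\<^sup>2 * \<tau>} y))"

end

theory Submission
  imports Defs
begin

text \<open>
  After rescaling to \<open>\<sigma> = 1\<close> and putting \<open>a = \<surd>\<tau> \<ge> 1\<close>, integration by parts gives the closed form
  \<open>E\<^sub>\<theta>[(Y\<^sup>2 - 1) 1(|Y| \<le> a)] = \<theta>\<^sup>2 P\<^sub>\<theta>(|Y| \<le> a) - (a + \<theta>) \<phi>(a - \<theta>) - (a - \<theta>) \<phi>(a + \<theta>)\<close>,
  so the difference to \<open>\<theta> = 0\<close> is \<open>\<theta>\<^sup>2 P\<^sub>\<theta> - B(\<theta>)\<close> with a boundary term \<open>B(0) = 0\<close>.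
  The bound \<open>\<theta>\<^sup>2\<close> from above and below amounts to \<open>\<theta>\<^sup>2 (1 - P\<^sub>\<theta>) + B(\<theta>)\<close> and
  \<open>(1 + \<phi>(1)) \<theta>\<^sup>2 - B(\<theta>)\<close> growing with \<open>|\<theta>|\<close>; the second is needed only for \<open>|\<theta>| \<le> 1\<close>,
  where \<open>P\<^sub>\<theta> \<ge> \<phi>(1)\<close>, and its derivative is controlled by the elementary estimate
  \<open>(1 + a\<^sup>2 - t\<^sup>2)(\<phi>(a - t) - \<phi>(a + t)) \<le> 2t(1 + \<phi>(1))\<close>. For \<open>|\<theta>| > 1\<close>, and for the bound
  \<open>3\<tau>\<close>, it suffices that \<open>-1 \<le> y\<^sup>2 - 1 \<le> a\<^sup>2 - 1\<close> on the window and \<open>\<phi> \<le> 1/2\<close>.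
\<close>

lemma normal_density_unit_variance: "normal_density \<theta> 1 y = std_normal_density (y - \<theta>)"
  by (simp add: normal_density_def)

lemma std_normal_density_pos: "0 < std_normal_density x"
  by (simp add: std_normal_density_def)

lemma std_normal_density_minus [simp]: "std_normal_density (- x) = std_normal_density x"
  by (simp add: std_normal_density_def)

lemma std_normal_density_le_if_sq_le:
  "x\<^sup>2 \<le> y\<^sup>2 \<Longrightarrow> std_normal_density y \<le> std_normal_density x"
  unfolding std_normal_density_def by (intro mult_left_mono) auto

lemma std_normal_density_le_half: "std_normal_density x \<le> 1/2"
proof -
  have "2 \<le> sqrt (2 * pi)"
    using pi_ge_two by (intro real_le_rsqrt) (simp add: power2_eq_square)
  then have "1 / sqrt (2 * pi) \<le> 1 / 2"
    by (intro divide_left_mono) auto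
  moreover have "exp (- x\<^sup>2 / 2) \<le> 1"
    by simp
  ultimately have "1 / sqrt (2 * pi) * exp (- x\<^sup>2 / 2) \<le> 1 / 2 * 1"
    by (intro mult_mono) auto
  then show ?thesis
    by (simp add: std_normal_density_def)
qed

lemma std_normal_density_has_real_derivative [derivative_intros]:
  assumes "(f has_real_derivative f') (at x within S)"
  shows "((\<lambda>x. std_normal_density (f x)) has_real_derivative
           - f x * std_normal_density (f x) * f') (at x within S)"
  unfolding std_normal_density_def
  by (rule derivative_eq_intros assms refl | simp)+

lemma isCont_std_normal_density [continuous_intros]:
  fixes f :: "real \<Rightarrow> real"
  assumes "isCont f x"
  shows "isCont (\<lambda>x. std_normal_density (f x)) x"
  using assms
  by (rule isCont_o2) (rule DERIV_isCont[OF std_normal_density_has_real_derivative[OF DERIV_ident]])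

lemma continuous_on_std_normal_density [continuous_intros]:
  "continuous_on S f \<Longrightarrow> continuous_on S (\<lambda>x. std_normal_density (f x))"
  unfolding std_normal_density_def by (intro continuous_intros) auto

lemma sinh_le_linear:
  fixes a t :: real
  assumes "0 \<le> t" "t \<le> 1" "0 \<le> a"
  shows "sinh (t * a) \<le> t * sinh a"
proof -
  have "convex_on {0..} (sinh :: real \<Rightarrow> real)"
    by (rule f''_ge0_imp_convex[where f' = cosh and f'' = sinh])
       (auto intro!: derivative_eq_intros)
  from convex_onD[OF this, of t 0 a] show ?thesis
    using assms by simp
qed

lemma one_plus_sq_mult_exp_le: "(1 + (a::real)\<^sup>2) * exp (- ((a - 1)\<^sup>2 / 2)) \<le> 343 / 100"
proof -
  have "1 + a\<^sup>2 \<le> 343 / 100 * (1 + (a - 1)\<^sup>2 / 2)"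
    using zero_le_power2[of "a - 343/143"] by (simp add: power2_eq_square field_simps)
  also have "\<dots> \<le> 343 / 100 * exp ((a - 1)\<^sup>2 / 2)"
    by (intro mult_left_mono exp_ge_add_one_self) simp
  finally show ?thesis
    by (simp add: exp_minus field_simps)
qed

lemma exp_half_le: "343 / 100 * exp (1/2 :: real) \<le> 2 * sqrt (2 * pi) + 2 * exp (- 1/2)"
proof -
  define E where "E = exp (1/2 :: real)"
  have sqrt_pi: "2.505 \<le> sqrt (2 * pi)"
    using pi_approx by (intro real_le_rsqrt) (simp add: power2_eq_square)
  have E_ge: "1.5 \<le> E"
    unfolding E_def using exp_ge_add_one_self[of "1/2 :: real"] by simp
  have "E * E = exp 1"
    unfolding E_def by (simp flip: exp_add)
  also have "\<dots> \<le> 2.7183"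
    using e_approx_32 by (simp add: abs_if split: if_splits)
  finally have "343 / 100 * E * E \<le> 2 * 2.505 * 1.5 + 2"
    by simp
  also have "\<dots> \<le> 2 * sqrt (2 * pi) * E + 2"
    using sqrt_pi E_ge by (intro add_right_mono mult_mono) auto
  finally have "343 / 100 * E \<le> 2 * sqrt (2 * pi) + 2 / E"
    using E_ge by (simp add: field_simps)
  moreover have "2 / E = 2 * exp (- 1 / 2)"
    unfolding E_def by (simp add: exp_minus inverse_eq_divide)
  ultimately show ?thesis
    unfolding E_def by simp
qed

lemma std_normal_density_diff_eq:
  "std_normal_density (a - t) - std_normal_density (a + t)
     = 2 * exp (- (a\<^sup>2 + t\<^sup>2) / 2) * sinh (t * a) / sqrt (2 * pi)"
proof -
  have "- (a - t)\<^sup>2 / 2 = - (a\<^sup>2 + t\<^sup>2) / 2 + t * a"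
       "- (a + t)\<^sup>2 / 2 = - (a\<^sup>2 + t\<^sup>2) / 2 + - (t * a)"
    by (simp_all add: power2_eq_square field_simps)
  then have "exp (- (a - t)\<^sup>2 / 2) - exp (- (a + t)\<^sup>2 / 2)
      = exp (- (a\<^sup>2 + t\<^sup>2) / 2) * (exp (t * a) - exp (- (t * a)))"
    unfolding right_diff_distrib by (simp only: exp_add)
  then show ?thesis
    by (simp add: std_normal_density_def sinh_def flip: diff_divide_distrib)
qed

lemma std_normal_density_diff_le:
  assumes a: "1 \<le> a" and t: "0 \<le> t" "t \<le> 1"
  shows "(1 + a\<^sup>2 - t\<^sup>2) * (std_normal_density (a - t) - std_normal_density (a + t))
           \<le> 2 * t * (1 + std_normal_density 1)"
proof -
  define s where "s = sqrt (2 * pi)"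
  have s: "0 < s"
    by (simp add: s_def)
  note diff = std_normal_density_diff_eq[of a t, folded s_def]
  have "0 \<le> std_normal_density (a - t) - std_normal_density (a + t)"
    unfolding diff using a t s by (intro divide_nonneg_pos mult_nonneg_nonneg) auto
  then have "(1 + a\<^sup>2 - t\<^sup>2) * (std_normal_density (a - t) - std_normal_density (a + t))
               \<le> (1 + a\<^sup>2) * (2 * exp (- (a\<^sup>2 + t\<^sup>2) / 2) * sinh (t * a) / s)"
    unfolding diff by (intro mult_right_mono) auto
  also have "\<dots> \<le> (1 + a\<^sup>2) * (exp (- a\<^sup>2 / 2) * (t * exp a) / s)"
  proof -
    have "2 * sinh (t * a) \<le> t * (2 * sinh a)"
      using sinh_le_linear[OF t, of a] a by simp
    also have "\<dots> \<le> t * exp a"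
      using t by (intro mult_left_mono) (simp_all add: sinh_def)
    finally have sinh_bound: "2 * sinh (t * a) \<le> t * exp a" .
    have "exp (- (a\<^sup>2 + t\<^sup>2) / 2) * (2 * sinh (t * a)) \<le> exp (- a\<^sup>2 / 2) * (t * exp a)"
      by (rule mult_mono[OF _ sinh_bound]) (use a t in auto)
    then show ?thesis
      using s by (intro mult_left_mono divide_right_mono) auto
  qed
  also have "\<dots> = t / s * ((1 + a\<^sup>2) * exp (- ((a - 1)\<^sup>2 / 2)) * exp (1/2))"
    by (simp add: field_simps power2_eq_square flip: exp_add)
  also have "\<dots> \<le> t / s * (343 / 100 * exp (1/2))"
    using s t one_plus_sq_mult_exp_le[of a] by (intro mult_left_mono mult_right_mono) auto
  also have "\<dots> \<le> t / s * (2 * s + 2 * exp (- 1/2))"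
    using s t exp_half_le by (intro mult_left_mono) (auto simp: s_def)
  also have "\<dots> = 2 * t * (1 + std_normal_density 1)"
    using s by (simp add: std_normal_density_def s_def field_simps)
  finally show ?thesis .
qed

lemma std_normal_density_diff_sign:
  assumes "0 \<le> a"
  shows "0 \<le> x * (std_normal_density (a - x) - std_normal_density (a + x))"
proof (cases "0 \<le> x")
  case True
  then have "std_normal_density (a + x) \<le> std_normal_density (a - x)"
    using assms by (intro std_normal_density_le_if_sq_le) (simp add: power2_eq_square algebra_simps)
  then show ?thesis
    using True by simp
next
  case False
  then have "std_normal_density (a - x) \<le> std_normal_density (a + x)"
    using assms by (intro std_normal_density_le_if_sq_le)
                   (simp add: power2_eq_square algebra_simps mult_nonneg_nonpos)
  then show ?thesis
    using False by (simp add: mult_nonpos_nonpos)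
qed

lemma ge_at_zero_if_derivative_sign:
  fixes f f' :: "real \<Rightarrow> real"
  assumes deriv: "\<And>x. \<bar>x\<bar> \<le> \<bar>t\<bar> \<Longrightarrow> (f has_real_derivative f' x) (at x)"
    and sign: "\<And>x. \<bar>x\<bar> \<le> \<bar>t\<bar> \<Longrightarrow> 0 \<le> x * f' x"
  shows "f 0 \<le> f t"
proof -
  have "isCont f x" if "\<bar>x\<bar> \<le> \<bar>t\<bar>" for x
    using deriv[OF that] by (rule DERIV_isCont)
  then have cont: "continuous_on {min 0 t..max 0 t} f"
    by (intro continuous_at_imp_continuous_on) auto
  show ?thesis
  proof (cases "0 \<le> t")
    case True
    show ?thesis
    proof (rule DERIV_nonneg_imp_increasing_open[OF True])
      fix x assume "0 < x" "x < t"
      then show "\<exists>y. DERIV f x :> y \<and> 0 \<le> y"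
        using deriv[of x] sign[of x] by (auto simp: zero_le_mult_iff)
    qed (use cont True in simp)
  next
    case False
    show ?thesis
    proof (rule DERIV_nonpos_imp_decreasing_open[of t 0])
      fix x assume "t < x" "x < 0"
      then show "\<exists>y. DERIV f x :> y \<and> y \<le> 0"
        using deriv[of x] sign[of x] by (auto simp: zero_le_mult_iff)
    qed (use cont False in auto)
  qed
qed

lemma trunc_moment_scale:
  assumes "0 < \<sigma>"
  shows "trunc_moment \<theta> \<sigma> \<tau> = \<sigma>\<^sup>2 * trunc_moment (\<theta> / \<sigma>) 1 \<tau>"
proof -
  define F where "F y = normal_density \<theta> \<sigma> y * ((y\<^sup>2 - \<sigma>\<^sup>2) * indicator {y. y\<^sup>2 \<le> \<sigma>\<^sup>2 * \<tau>} y)" for y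
  define G where "G x = normal_density (\<theta> / \<sigma>) 1 x * ((x\<^sup>2 - 1\<^sup>2) * indicator {y. y\<^sup>2 \<le> 1\<^sup>2 * \<tau>} x)" for x
  have density: "normal_density \<theta> \<sigma> (\<sigma> * x) = normal_density (\<theta> / \<sigma>) 1 x / \<sigma>" for x
  proof -
    have "(\<sigma> * x - \<theta>)\<^sup>2 / \<sigma>\<^sup>2 = (x - \<theta> / \<sigma>)\<^sup>2"
      using assms by (simp add: power_divide[symmetric] diff_divide_distrib)
    moreover have "sqrt (2 * pi * \<sigma>\<^sup>2) = sqrt (2 * pi) * \<sigma>"
      using assms by (simp add: real_sqrt_mult)
    ultimately show ?thesis
      using assms by (simp add: normal_density_def)
  qed
  have window: "indicator {y. y\<^sup>2 \<le> \<sigma>\<^sup>2 * \<tau>} (\<sigma> * x) = (indicator {y. y\<^sup>2 \<le> 1\<^sup>2 * \<tau>} x :: real)" for x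
    using assms by (simp add: indicator_def power_mult_distrib)
  have "F (\<sigma> * x) = \<sigma> * G x" for x
    unfolding F_def G_def density window using assms
    by (simp add: power_mult_distrib field_simps power2_eq_square)
  then have "trunc_moment \<theta> \<sigma> \<tau> = \<bar>\<sigma>\<bar> *\<^sub>R (LINT x|lborel. \<sigma> * G x)"
    unfolding trunc_moment_def F_def[symmetric]
    using lborel_integral_real_affine[of \<sigma> F 0] assms by simp
  then show ?thesis
    using assms by (simp add: trunc_moment_def G_def power2_eq_square)
qed

definition window_prob :: "real \<Rightarrow> real \<Rightarrow> real" where
  "window_prob a \<theta> = (LINT y|lborel. indicator {-a..a} y * std_normal_density (y - \<theta>))"

definition window_moment :: "real \<Rightarrow> real \<Rightarrow> real" where
  "window_moment a \<theta> =
     (LINT y|lborel. indicator {-a..a} y * (std_normal_density (y - \<theta>) * (y\<^sup>2 - 1)))"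

lemma trunc_moment_unit_variance: "trunc_moment \<theta> 1 \<tau> = window_moment (sqrt \<tau>) \<theta>"
proof -
  have "y\<^sup>2 \<le> \<tau> \<longleftrightarrow> \<bar>y\<bar> \<le> sqrt \<tau>" for y
  proof
    assume "y\<^sup>2 \<le> \<tau>"
    then show "\<bar>y\<bar> \<le> sqrt \<tau>"
      using real_sqrt_le_mono[of "y\<^sup>2" \<tau>] by simp
  qed (rule sqrt_ge_absD)
  then have "y \<in> {y. y\<^sup>2 \<le> 1\<^sup>2 * \<tau>} \<longleftrightarrow> y \<in> {- sqrt \<tau>..sqrt \<tau>}" for y
    by (simp add: abs_le_iff) linarith
  then have window: "{y. y\<^sup>2 \<le> 1\<^sup>2 * \<tau>} = {- sqrt \<tau>..sqrt \<tau>}"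
    by blast
  show ?thesis
    unfolding trunc_moment_def window_moment_def window
    by (rule Bochner_Integration.integral_cong[OF refl]) (simp add: normal_density_unit_variance[of \<theta>])
qed

lemma integrable_indicator_Icc_mult:
  fixes g :: "real \<Rightarrow> real"
  assumes "\<And>x. isCont g x"
  shows "integrable lborel (\<lambda>x. indicator {c..d} x * g x)"
  using borel_integrable_atLeastAtMost[of c d g] assms by (simp add: mult.commute)

lemma integrable_std_normal_density_shift:
  "integrable lborel (\<lambda>y. std_normal_density (y - \<theta>))"
proof -
  have "integrable lborel (normal_density \<theta> 1)"
    by simp
  then show ?thesis
    unfolding normal_density_unit_variance[of \<theta>, abs_def] .
qed

lemma integral_std_normal_density_shift:
  "(LINT y|lborel. std_normal_density (y - \<theta>)) = 1"
proof -
  have "(LINT y|lborel. normal_density \<theta> 1 y) = 1"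
    by simp
  then show ?thesis
    unfolding normal_density_unit_variance[of \<theta>] .
qed

lemma integrable_window_prob:
  "integrable lborel (\<lambda>y. indicator {c..d} y * std_normal_density (y - \<theta>))"
  by (intro integrable_indicator_Icc_mult continuous_intros)

lemma integrable_window_moment:
  "integrable lborel (\<lambda>y. indicator {c..d} y * (std_normal_density (y - \<theta>) * (y\<^sup>2 - 1)))"
  by (intro integrable_indicator_Icc_mult continuous_intros)

lemma window_prob_le_one: "window_prob a \<theta> \<le> 1"
proof -
  have "window_prob a \<theta> \<le> (LINT y|lborel. std_normal_density (y - \<theta>))"
    unfolding window_prob_def
    by (rule integral_mono[OF integrable_window_prob integrable_std_normal_density_shift])
       (auto simp: indicator_def less_imp_le[OF std_normal_density_pos])
  then show ?thesis
    by (simp add: integral_std_normal_density_shift)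
qed

lemma window_prob_ge:
  assumes "1 \<le> a" and "\<bar>\<theta>\<bar> \<le> 1"
  shows "std_normal_density 1 \<le> window_prob a \<theta>"
proof -
  define c where "c = (if 0 \<le> \<theta> then \<theta> - 1 else \<theta>)"
  \<comment> \<open>a unit interval inside both \<open>[-a, a]\<close> and \<open>[\<theta> - 1, \<theta> + 1]\<close>\<close>
  have inside: "y \<in> {-a..a}" "(y - \<theta>)\<^sup>2 \<le> 1\<^sup>2" if "y \<in> {c..c + 1}" for y
    using assms that abs_le_square_iff[of "y - \<theta>" 1] unfolding c_def
    by (auto split: if_splits)
  have "std_normal_density 1 = (LINT y|lborel. indicator {c..c + 1} y * std_normal_density 1)"
    by simp
  also have "\<dots> \<le> window_prob a \<theta>"
    unfolding window_prob_def
  proof (rule integral_mono[OF _ integrable_window_prob])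
    show "integrable lborel (\<lambda>y. indicator {c..c + 1} y * std_normal_density 1)"
      by (intro integrable_indicator_Icc_mult continuous_intros)
    show "indicator {c..c + 1} y * std_normal_density 1
            \<le> indicator {-a..a} y * std_normal_density (y - \<theta>)" for y
      using inside[of y] std_normal_density_le_if_sq_le[of "y - \<theta>" 1]
      by (cases "y \<in> {c..c + 1}") (auto simp: less_imp_le[OF std_normal_density_pos])
  qed
  finally show ?thesis .
qed

lemma window_moment_ge: "- window_prob a \<theta> \<le> window_moment a \<theta>"
proof -
  have "(LINT y|lborel. - (indicator {-a..a} y * std_normal_density (y - \<theta>))) \<le> window_moment a \<theta>"
    unfolding window_moment_def
    by (rule integral_mono[OF integrable_minus[OF integrable_window_prob] integrable_window_moment])
       (auto simp: indicator_def less_imp_le[OF std_normal_density_pos] algebra_simps)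
  then show ?thesis
    by (simp add: window_prob_def)
qed

lemma window_moment_le: "window_moment a \<theta> \<le> (a\<^sup>2 - 1) * window_prob a \<theta>"
proof -
  have "window_moment a \<theta>
          \<le> (LINT y|lborel. (a\<^sup>2 - 1) * (indicator {-a..a} y * std_normal_density (y - \<theta>)))"
    unfolding window_moment_def
  proof (rule integral_mono[OF integrable_window_moment integrable_mult_right[OF integrable_window_prob]])
    fix y
    have "y\<^sup>2 \<le> a\<^sup>2" if "y \<in> {-a..a}"
      using that abs_le_square_iff[of y a] by auto
    then show "indicator {-a..a} y * (std_normal_density (y - \<theta>) * (y\<^sup>2 - 1))
                 \<le> (a\<^sup>2 - 1) * (indicator {-a..a} y * std_normal_density (y - \<theta>))"
      using std_normal_density_pos[of "y - \<theta>"]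
      by (cases "y \<in> {-a..a}") (simp_all add: mult_left_mono mult.commute)
  qed
  then show ?thesis
    by (simp add: window_prob_def)
qed

lemma window_moment_eq:
  assumes "0 \<le> a"
  shows "window_moment a \<theta> = \<theta>\<^sup>2 * window_prob a \<theta>
           - (a + \<theta>) * std_normal_density (a - \<theta>) - (a - \<theta>) * std_normal_density (a + \<theta>)"
proof -
  define F where "F y = - (y + \<theta>) * std_normal_density (y - \<theta>)" for y
  have "(LINT y|lborel. indicator {-a..a} y *\<^sub>R (std_normal_density (y - \<theta>) * (y\<^sup>2 - 1 - \<theta>\<^sup>2)))
          = F a - F (- a)"
  proof (rule integral_FTC_atLeastAtMost)
    show "(F has_vector_derivative std_normal_density (x - \<theta>) * (x\<^sup>2 - 1 - \<theta>\<^sup>2)) (at x within {-a..a})"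
      for x
      unfolding F_def has_real_derivative_iff_has_vector_derivative[symmetric]
      by (auto intro!: derivative_eq_intros simp: algebra_simps power2_eq_square)
  qed (use assms in \<open>auto intro!: continuous_intros\<close>)
  moreover have "F (- a) = (a - \<theta>) * std_normal_density (a + \<theta>)"
    using std_normal_density_minus[of "a + \<theta>"] unfolding F_def
    by (simp del: std_normal_density_minus)
  ultimately have primitive:
    "(LINT y|lborel. indicator {-a..a} y * (std_normal_density (y - \<theta>) * (y\<^sup>2 - 1 - \<theta>\<^sup>2)))
       = - (a + \<theta>) * std_normal_density (a - \<theta>) - (a - \<theta>) * std_normal_density (a + \<theta>)"
    by (simp add: F_def)
  have "window_moment a \<theta>
          = (LINT y|lborel. indicator {-a..a} y * (std_normal_density (y - \<theta>) * (y\<^sup>2 - 1 - \<theta>\<^sup>2))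
                          + \<theta>\<^sup>2 * (indicator {-a..a} y * std_normal_density (y - \<theta>)))"
    unfolding window_moment_def by (simp add: algebra_simps)
  also have "\<dots> = (LINT y|lborel. indicator {-a..a} y * (std_normal_density (y - \<theta>) * (y\<^sup>2 - 1 - \<theta>\<^sup>2)))
                    + \<theta>\<^sup>2 * window_prob a \<theta>"
    unfolding window_prob_def
    by (subst Bochner_Integration.integral_add)
       (auto intro!: integrable_mult_right integrable_window_prob integrable_indicator_Icc_mult
             continuous_intros)
  finally show ?thesis
    unfolding primitive by (simp add: algebra_simps)
qed

lemma window_prob_has_real_derivative:
  assumes "0 \<le> a"
  shows "(window_prob a has_real_derivative
            std_normal_density (a + \<theta>) - std_normal_density (a - \<theta>)) (at \<theta>)"
proof -
  define R where "R = a + \<bar>\<theta>\<bar> + 2"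
  define \<Psi> where "\<Psi> x = integral {-R..x} std_normal_density" for x
  have \<Psi>_deriv: "((\<lambda>x. \<Psi> (f x)) has_real_derivative std_normal_density (f x) * f') (at x)"
    if f: "(f has_real_derivative f') (at x)" and "\<bar>f x\<bar> < R" for f f' x
  proof (rule DERIV_chain2[OF _ f])
    have "continuous_on {-R..R} std_normal_density"
      by (intro continuous_intros)
    then have "(\<Psi> has_real_derivative std_normal_density (f x)) (at (f x) within {-R..R})"
      unfolding \<Psi>_def by (rule integral_has_real_derivative) (use that in auto)
    then show "(\<Psi> has_real_derivative std_normal_density (f x)) (at (f x))"
      using that by (simp add: at_within_Icc_at)
  qed
  have local_eq: "\<Psi> (a - x) - \<Psi> (- a - x) = window_prob a x" if "x \<in> ball \<theta> 1" for x
  proof -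
    have "(LINT y|lborel. indicator {-a..a} y *\<^sub>R std_normal_density (y - x))
            = \<Psi> (a - x) - \<Psi> (- a - x)"
    proof (rule integral_FTC_atLeastAtMost)
      fix y assume "-a \<le> y" "y \<le> a"
      then have "((\<lambda>y. \<Psi> (y - x)) has_real_derivative std_normal_density (y - x) * 1) (at y)"
        using that by (intro \<Psi>_deriv derivative_eq_intros) (auto simp: R_def dist_real_def)
      then show "((\<lambda>y. \<Psi> (y - x)) has_vector_derivative std_normal_density (y - x)) (at y within {-a..a})"
        by (simp add: has_real_derivative_iff_has_vector_derivative[symmetric] has_field_derivative_at_within)
    qed (use assms in \<open>auto intro!: continuous_intros\<close>)
    then show ?thesis
      by (simp add: window_prob_def)
  qed
  have "((\<lambda>x. \<Psi> (a - x) - \<Psi> (- a - x)) has_real_derivative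
          std_normal_density (a - \<theta>) * (0 - 1) - std_normal_density (- a - \<theta>) * (0 - 1)) (at \<theta>)"
    using assms by (intro derivative_intros \<Psi>_deriv) (auto simp: R_def)
  then have "((\<lambda>x. \<Psi> (a - x) - \<Psi> (- a - x)) has_real_derivative
               std_normal_density (a + \<theta>) - std_normal_density (a - \<theta>)) (at \<theta>)"
    using std_normal_density_minus[of "a + \<theta>"] by simp
  then show ?thesis
    by (rule has_field_derivative_transform_within_open[OF _ open_ball]) (auto intro: local_eq)
qed

definition window_boundary :: "real \<Rightarrow> real \<Rightarrow> real" where
  "window_boundary a \<theta> = (a + \<theta>) * std_normal_density (a - \<theta>)
     + (a - \<theta>) * std_normal_density (a + \<theta>) - 2 * a * std_normal_density a"

lemma window_moment_diff_eq:
  assumes "0 \<le> a"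
  shows "window_moment a \<theta> - window_moment a 0 = \<theta>\<^sup>2 * window_prob a \<theta> - window_boundary a \<theta>"
  using window_moment_eq[OF assms, of \<theta>] window_moment_eq[OF assms, of 0]
  by (simp add: window_boundary_def)

lemma window_boundary_has_real_derivative:
  "(window_boundary a has_real_derivative
      (1 + a\<^sup>2 - x\<^sup>2) * (std_normal_density (a - x) - std_normal_density (a + x))) (at x)"
  unfolding window_boundary_def[abs_def]
  by (auto intro!: derivative_eq_intros simp: algebra_simps power2_eq_square)

lemma window_moment_diff_le:
  assumes "0 \<le> a"
  shows "window_moment a \<theta> - window_moment a 0 \<le> \<theta>\<^sup>2"
proof -
  define D where "D x = std_normal_density (a - x) - std_normal_density (a + x)" for x
  define K where "K x = x\<^sup>2 * (1 - window_prob a x) + window_boundary a x" for x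
  have "K 0 \<le> K \<theta>"
  proof (rule ge_at_zero_if_derivative_sign)
    fix x
    show "(K has_real_derivative 2 * x * (1 - window_prob a x) + (1 + a\<^sup>2) * D x) (at x)"
    proof -
      have "(K has_real_derivative 2 * x * (1 - window_prob a x)
              + x\<^sup>2 * (0 - (std_normal_density (a + x) - std_normal_density (a - x)))
              + (1 + a\<^sup>2 - x\<^sup>2) * D x) (at x)"
        unfolding K_def[abs_def] D_def
        by (rule derivative_eq_intros window_prob_has_real_derivative[OF assms]
                 window_boundary_has_real_derivative refl | simp)+
      then show ?thesis
        by (simp add: D_def algebra_simps)
    qed
    have "0 \<le> x * x * (1 - window_prob a x)"
      using window_prob_le_one[of a x] by simp
    moreover have "0 \<le> (1 + a\<^sup>2) * (x * D x)"
      using std_normal_density_diff_sign[OF assms, of x] by (simp add: D_def)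
    ultimately show "0 \<le> x * (2 * x * (1 - window_prob a x) + (1 + a\<^sup>2) * D x)"
      by (simp add: algebra_simps)
  qed
  moreover have "K 0 = 0"
    by (simp add: K_def window_boundary_def)
  ultimately show ?thesis
    using window_moment_diff_eq[OF assms, of \<theta>] by (simp add: K_def algebra_simps)
qed

lemma window_boundary_le:
  assumes a: "1 \<le> a" and \<theta>: "\<bar>\<theta>\<bar> \<le> 1"
  shows "window_boundary a \<theta> \<le> (1 + std_normal_density 1) * \<theta>\<^sup>2"
proof -
  define c where "c = 1 + std_normal_density 1"
  define D where "D x = std_normal_density (a - x) - std_normal_density (a + x)" for x
  define H where "H x = c * x\<^sup>2 - window_boundary a x" for x
  have "H 0 \<le> H \<theta>"
  proof (rule ge_at_zero_if_derivative_sign)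
    fix x
    show "(H has_real_derivative 2 * c * x - (1 + a\<^sup>2 - x\<^sup>2) * D x) (at x)"
      unfolding H_def[abs_def] D_def
      by (rule derivative_eq_intros window_boundary_has_real_derivative refl | simp)+
    assume "\<bar>x\<bar> \<le> \<bar>\<theta>\<bar>"
    then have x: "\<bar>x\<bar> \<le> 1"
      using \<theta> by simp
    show "0 \<le> x * (2 * c * x - (1 + a\<^sup>2 - x\<^sup>2) * D x)"
    proof (cases "0 \<le> x")
      case True
      then have "(1 + a\<^sup>2 - x\<^sup>2) * D x \<le> 2 * c * x"
        using std_normal_density_diff_le[OF a True] x by (simp add: c_def D_def mult_ac)
      then show ?thesis
        using True by (intro mult_nonneg_nonneg) auto
    next
      case False
      then have "(1 + a\<^sup>2 - (- x)\<^sup>2) * D (- x) \<le> 2 * (- x) * c"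
        using std_normal_density_diff_le[OF a, of "- x"] x by (simp add: c_def D_def)
      then show ?thesis
        using False by (intro mult_nonpos_nonpos) (auto simp: D_def algebra_simps)
    qed
  qed
  then show ?thesis
    by (simp add: H_def c_def window_boundary_def)
qed

lemma window_moment_zero:
  assumes "0 \<le> a"
  shows "window_moment a 0 = - 2 * a * std_normal_density a"
  using window_moment_eq[OF assms, of 0] by simp

lemma window_moment_diff_ge_neg_one:
  assumes "0 \<le> a"
  shows "- 1 \<le> window_moment a \<theta> - window_moment a 0"
proof -
  have "0 \<le> 2 * a * std_normal_density a"
    using assms std_normal_density_pos[of a] by simp
  then show ?thesis
    using window_moment_ge[of a \<theta>] window_prob_le_one[of a \<theta>] window_moment_zero[OF assms]
    by linarith
qed

lemma window_moment_diff_ge: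
  assumes "1 \<le> a"
  shows "- \<theta>\<^sup>2 \<le> window_moment a \<theta> - window_moment a 0"
proof (cases "\<bar>\<theta>\<bar> \<le> 1")
  case True
  have "window_boundary a \<theta> \<le> (1 + std_normal_density 1) * \<theta>\<^sup>2"
    using window_boundary_le[OF assms True] .
  moreover have "std_normal_density 1 * \<theta>\<^sup>2 \<le> window_prob a \<theta> * \<theta>\<^sup>2"
    using window_prob_ge[OF assms True] by (rule mult_right_mono) simp
  ultimately show ?thesis
    using window_moment_diff_eq[of a \<theta>] assms by (simp add: algebra_simps)
next
  case False
  then have "1 \<le> \<theta>\<^sup>2"
    using abs_le_square_iff[of 1 \<theta>] by simp
  then show ?thesis
    using window_moment_diff_ge_neg_one[of a \<theta>] assms by simp
qed

lemma window_moment_diff_le_three_sq: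
  assumes "1 \<le> a"
  shows "window_moment a \<theta> - window_moment a 0 \<le> 3 * a\<^sup>2"
proof -
  have "1 \<le> a\<^sup>2"
    using assms by (simp add: one_le_power)
  then have "(a\<^sup>2 - 1) * window_prob a \<theta> \<le> (a\<^sup>2 - 1) * 1"
    by (intro mult_left_mono window_prob_le_one) simp
  then have "window_moment a \<theta> \<le> a\<^sup>2 - 1"
    using window_moment_le[of a \<theta>] by simp
  moreover have "- window_moment a 0 \<le> a"
    using window_moment_zero[of a] std_normal_density_le_half[of a] assms by simp
  moreover have "a \<le> a\<^sup>2"
    using assms by (simp add: power2_eq_square)
  ultimately show ?thesis
    using zero_le_power2[of a] by linarith
qed

lemma window_moment_diff_abs_le:
  assumes "1 \<le> a"
  shows "\<bar>window_moment a \<theta> - window_moment a 0\<bar> \<le> min (\<theta>\<^sup>2) (3 * a\<^sup>2)"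
proof -
  have "1 \<le> a\<^sup>2"
    using assms by (simp add: one_le_power)
  then have "- (3 * a\<^sup>2) \<le> window_moment a \<theta> - window_moment a 0"
    using window_moment_diff_ge_neg_one[of a \<theta>] assms by linarith
  then show ?thesis
    using window_moment_diff_le[of a \<theta>] window_moment_diff_ge[OF assms, of \<theta>]
          window_moment_diff_le_three_sq[OF assms, of \<theta>] assms
    by (simp add: abs_le_iff)
qed

theorem lemma6:
  fixes \<theta> \<sigma> \<tau> \<theta>\<^sub>0 :: real
  assumes "\<sigma> > 0" and "\<tau> \<ge> 1"
    and "\<theta>\<^sub>0 = trunc_moment 0 \<sigma> \<tau>"
  shows "\<bar>trunc_moment \<theta> \<sigma> \<tau> - \<theta>\<^sub>0\<bar> \<le> min (\<theta>\<^sup>2) (3 * \<sigma>\<^sup>2 * \<tau>)"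
proof -
  have "1 \<le> sqrt \<tau>" and "(sqrt \<tau>)\<^sup>2 = \<tau>"
    using assms by simp_all
  then have standard: "\<bar>trunc_moment (\<theta> / \<sigma>) 1 \<tau> - trunc_moment 0 1 \<tau>\<bar> \<le> min ((\<theta> / \<sigma>)\<^sup>2) (3 * \<tau>)"
    using window_moment_diff_abs_le[of "sqrt \<tau>" "\<theta> / \<sigma>"] trunc_moment_unit_variance assms
    by simp
  have "\<bar>trunc_moment \<theta> \<sigma> \<tau> - \<theta>\<^sub>0\<bar> = \<sigma>\<^sup>2 * \<bar>trunc_moment (\<theta> / \<sigma>) 1 \<tau> - trunc_moment 0 1 \<tau>\<bar>"
    using assms trunc_moment_scale[of \<sigma> \<theta> \<tau>] trunc_moment_scale[of \<sigma> 0 \<tau>]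
    by (simp add: abs_mult flip: right_diff_distrib)
  also have "\<dots> \<le> \<sigma>\<^sup>2 * min ((\<theta> / \<sigma>)\<^sup>2) (3 * \<tau>)"
    using standard by (rule mult_left_mono) simp
  also have "\<dots> = min (\<theta>\<^sup>2) (3 * \<sigma>\<^sup>2 * \<tau>)"
    using assms by (simp add: min_def power_divide field_simps)
  finally show ?thesis .
qed

end
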